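(* Let $(\mathbb{P},\le,f)$ be a forcing property for $\mathcal{L}_A$. Every condition $p\in\mathbb{P}$ belongs to a generic set.
   Context: $\mathcal{L}$ is a countable continuous signature; formulas of $\mathcal{L}_{\omega_1,\omega}$ are built from atomic formulas using $\neg$, $\tfrac12$, $\dotplus$, countable conjunctions $\bigwedge$ and $\inf_x$. $\mathcal{L}_A$ is a countable fragment, $C=\{c_i:i<\omega\}$ new constants, $\mathcal{L}_A(C)$ the smallest countable fragment of $\mathcal{L}_{\omega_1,\omega}(C)$ containing $\mathcal{L}_A$ (a countable set), $\mathcal{L}_A^s(C)$ its sentences, $\mathcal{L}_A^{as}(C)$ its atomic sentences, $\mathcal{T}(C)$ closed terms. A forcing property $(\mathbb{P},\le,f)$: poset with $f_p\colon\mathcal{L}_A^{as}(C)\to[0,1]$ such that (1) $p\le q\Rightarrow f_p\le f_q$; (2) for every $p$, $\varepsilon>0$, $\tau,\sigma\in\mathcal{T}(C)$, atomic $\varphi(x)$ there are $q\le p$, $c\in C$ with $f_q(d(\tau,c))<\varepsilon$, $f_q(d(\tau,\sigma))<f_p(d(\sigma,\tau))+\varepsilon$, and if $f_p(d(\tau,\sigma))<\delta_{\varphi,x}(\varepsilon)$ then $f_q(\varphi(\sigma))<f_p(\varphi(\tau))+\varepsilon$. $F_p$: $f_p$ on atomics; $F_p(\neg\varphi)=1-\inf_{q\le p}F_q(\varphi)$; $F_p(\tfrac12\varphi)=\tfrac12F_p(\varphi)$; $F_p(\varphi\dotplus\psi)=\min(F_p(\varphi)+F_p(\psi),1)$; $F_p(\bigwedge\Phi)=\inf_{\varphi\in\Phi}F_p(\varphi)$;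 $F_p(\inf_x\varphi)=\inf_{c\in C}F_p(\varphi(c))$. A nonempty $G\subseteq\mathbb{P}$ is generic if it is downward directed (any two elements have a common lower bound in $G$), upward closed, and for every $\varphi\in\mathcal{L}_A^s(C)$ and $r>1$ there is $p\in G$ with $F_p(\varphi)+F_p(\neg\varphi)<r$. *)

theory Defs
  imports Complex_Main "HOL-Library.Countable" "HOL-Library.Countable_Set"
begin

text \<open>A continuous signature: arities of function symbols ('f) and predicate
  symbols ('r), together with moduli of uniform continuity, one per argument place.
  Constants of the signature are 0-ary function symbols.\<close>

record ('f, 'r) csig =
  farity :: "'f \<Rightarrow> nat"
  rarity :: "'r \<Rightarrow> nat"
  fmod   :: "'f \<Rightarrow> nat \<Rightarrow> real \<Rightarrow> real"
  rmod   :: "'r \<Rightarrow> nat \<Rightarrow> real \<Rightarrow> real"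

definition valid_sig :: "('f, 'r) csig \<Rightarrow> bool" where
  "valid_sig S \<longleftrightarrow>
     (\<forall>g i e. i < farity S g \<and> 0 < e \<longrightarrow> 0 < fmod S g i e) \<and>
     (\<forall>R i e. i < rarity S R \<and> 0 < e \<longrightarrow> 0 < rmod S R i e)"

text \<open>Terms: variables, the new constants c_i (Cst i), and applications.\<close>
datatype 'f trm = Var nat | Cst nat | App 'f "'f trm list"

datatype ('f, 'r) atom = Dist "'f trm" "'f trm" | Rel 'r "'f trm list"

text \<open>Formulas: atomic, negation, one half, truncated sum, countable
  conjunction (indexed by nat), and inf over a variable.\<close>
datatype ('f, 'r) frm =
    Atom "('f, 'r) atom"
  | Neg "('f, 'r) frm"
  | Half "('f, 'r) frm"
  | Plus "('f, 'r) frm" "('f, 'r) frm"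
  | Conj "nat \<Rightarrow> ('f, 'r) frm"
  | Inf nat "('f, 'r) frm"

primrec fvt :: "'f trm \<Rightarrow> nat set" where
  "fvt (Var n) = {n}"
| "fvt (Cst n) = {}"
| "fvt (App g ts) = \<Union> (set (map fvt ts))"

primrec fva :: "('f, 'r) atom \<Rightarrow> nat set" where
  "fva (Dist t u) = fvt t \<union> fvt u"
| "fva (Rel R ts) = \<Union> (fvt ` set ts)"

primrec fv :: "('f, 'r) frm \<Rightarrow> nat set" where
  "fv (Atom a) = fva a"
| "fv (Neg \<phi>) = fv \<phi>"
| "fv (Half \<phi>) = fv \<phi>"
| "fv (Plus \<phi> \<psi>) = fv \<phi> \<union> fv \<psi>"
| "fv (Conj \<Phi>) = (\<Union>n. fv (\<Phi> n))"
| "fv (Inf x \<phi>) = fv \<phi> - {x}"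

text \<open>Well-formedness; the flag says whether the new constants C may occur.\<close>
primrec wft :: "('f, 'r) csig \<Rightarrow> bool \<Rightarrow> 'f trm \<Rightarrow> bool" where
  "wft S b (Var n) = True"
| "wft S b (Cst n) = b"
| "wft S b (App g ts) = (length ts = farity S g \<and> list_all (wft S b) ts)"

primrec wfa :: "('f, 'r) csig \<Rightarrow> bool \<Rightarrow> ('f, 'r) atom \<Rightarrow> bool" where
  "wfa S b (Dist t u) = (wft S b t \<and> wft S b u)"
| "wfa S b (Rel R ts) = (length ts = rarity S R \<and> list_all (wft S b) ts)"

primrec wff :: "('f, 'r) csig \<Rightarrow> bool \<Rightarrow> ('f, 'r) frm \<Rightarrow> bool" where
  "wff S b (Atom a) = wfa S b a"
| "wff S b (Neg \<phi>) = wff S b \<phi>"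
| "wff S b (Half \<phi>) = wff S b \<phi>"
| "wff S b (Plus \<phi> \<psi>) = (wff S b \<phi> \<and> wff S b \<psi>)"
| "wff S b (Conj \<Phi>) = ((\<forall>n. wff S b (\<Phi> n)) \<and> finite (\<Union>n. fv (\<Phi> n)))"
| "wff S b (Inf x \<phi>) = wff S b \<phi>"

primrec subst_trm :: "(nat \<Rightarrow> 'f trm) \<Rightarrow> 'f trm \<Rightarrow> 'f trm" where
  "subst_trm s (Var n) = s n"
| "subst_trm s (Cst n) = Cst n"
| "subst_trm s (App g ts) = App g (map (subst_trm s) ts)"

primrec subst_atom :: "(nat \<Rightarrow> 'f trm) \<Rightarrow> ('f, 'r) atom \<Rightarrow> ('f, 'r) atom" where
  "subst_atom s (Dist t u) = Dist (subst_trm s t) (subst_trm s u)"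
| "subst_atom s (Rel R ts) = Rel R (map (subst_trm s) ts)"

primrec substf :: "(nat \<Rightarrow> 'f trm) \<Rightarrow> ('f, 'r) frm \<Rightarrow> ('f, 'r) frm" where
  "substf s (Atom a) = Atom (subst_atom s a)"
| "substf s (Neg \<phi>) = Neg (substf s \<phi>)"
| "substf s (Half \<phi>) = Half (substf s \<phi>)"
| "substf s (Plus \<phi> \<psi>) = Plus (substf s \<phi>) (substf s \<psi>)"
| "substf s (Conj \<Phi>) = Conj (\<lambda>n. substf s (\<Phi> n))"
| "substf s (Inf x \<phi>) = Inf x (substf (s(x := Var x)) \<phi>)"

primrec freefor :: "'f trm \<Rightarrow> nat \<Rightarrow> ('f, 'r) frm \<Rightarrow> bool" where
  "freefor t x (Atom a) = True"
| "freefor t x (Neg \<phi>) = freefor t x \<phi>"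
| "freefor t x (Half \<phi>) = freefor t x \<phi>"
| "freefor t x (Plus \<phi> \<psi>) = (freefor t x \<phi> \<and> freefor t x \<psi>)"
| "freefor t x (Conj \<Phi>) = (\<forall>n. freefor t x (\<Phi> n))"
| "freefor t x (Inf y \<phi>) = (y = x \<or> x \<notin> fv \<phi> \<or> (y \<notin> fvt t \<and> freefor t x \<phi>))"

text \<open>A fragment of L_{omega1,omega} (b = False) or of L_{omega1,omega}(C) (b = True):
  a set of formulas containing all atomic formulas, closed under the finitary
  connectives, under inf_x, under subformulas and under substitution of terms.\<close>
definition is_fragment :: "('f, 'r) csig \<Rightarrow> bool \<Rightarrow> ('f, 'r) frm set \<Rightarrow> bool" where
  "is_fragment S b F \<longleftrightarrow>
     F \<subseteq> {\<phi>. wff S b \<phi>} \<and>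
     (\<forall>a. wfa S b a \<longrightarrow> Atom a \<in> F) \<and>
     (\<forall>\<phi>\<in>F. Neg \<phi> \<in> F \<and> Half \<phi> \<in> F \<and> (\<forall>x. Inf x \<phi> \<in> F)) \<and>
     (\<forall>\<phi>\<in>F. \<forall>\<psi>\<in>F. Plus \<phi> \<psi> \<in> F) \<and>
     (\<forall>\<phi>. Neg \<phi> \<in> F \<longrightarrow> \<phi> \<in> F) \<and>
     (\<forall>\<phi>. Half \<phi> \<in> F \<longrightarrow> \<phi> \<in> F) \<and>
     (\<forall>\<phi> \<psi>. Plus \<phi> \<psi> \<in> F \<longrightarrow> \<phi> \<in> F \<and> \<psi> \<in> F) \<and>
     (\<forall>\<Phi>. Conj \<Phi> \<in> F \<longrightarrow> (\<forall>n. \<Phi> n \<in> F)) \<and>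
     (\<forall>x \<phi>. Inf x \<phi> \<in> F \<longrightarrow> \<phi> \<in> F) \<and>
     (\<forall>\<phi>\<in>F. \<forall>x t. wft S b t \<and> freefor t x \<phi> \<longrightarrow> substf (Var(x := t)) \<phi> \<in> F)"

definition countable_fragment :: "('f, 'r) csig \<Rightarrow> ('f, 'r) frm set \<Rightarrow> bool" where
  "countable_fragment S LA \<longleftrightarrow> is_fragment S False LA \<and> countable LA"

definition LAC :: "('f, 'r) csig \<Rightarrow> ('f, 'r) frm set \<Rightarrow> ('f, 'r) frm set" where
  "LAC S LA = \<Inter> {F. is_fragment S True F \<and> countable F \<and> LA \<subseteq> F}"

definition LAC_sent :: "('f, 'r) csig \<Rightarrow> ('f, 'r) frm set \<Rightarrow> ('f, 'r) frm set" where
  "LAC_sent S LA = {\<phi> \<in> LAC S LA. fv \<phi> = {}}"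

definition LAC_atsent :: "('f, 'r) csig \<Rightarrow> ('f, 'r) frm set \<Rightarrow> ('f, 'r) atom set" where
  "LAC_atsent S LA = {a. Atom a \<in> LAC S LA \<and> fva a = {}}"

definition closed_terms :: "('f, 'r) csig \<Rightarrow> 'f trm set" where
  "closed_terms S = {t. wft S True t \<and> fvt t = {}}"

section \<open>Moduli of uniform continuity delta_{phi,x}\<close>

primrec tdelta :: "('f, 'r) csig \<Rightarrow> 'f trm \<Rightarrow> nat \<Rightarrow> real \<Rightarrow> real" where
  "tdelta S (Var n) x = (\<lambda>e. e)"
| "tdelta S (Cst n) x = (\<lambda>e. e)"
| "tdelta S (App g ts) x =
     (let ds = map (\<lambda>t. tdelta S t x) ts in
      (\<lambda>e. foldr min (map (\<lambda>i. (ds ! i) (fmod S g i e)) [0..<length ts]) e))"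

primrec adelta :: "('f, 'r) csig \<Rightarrow> ('f, 'r) atom \<Rightarrow> nat \<Rightarrow> real \<Rightarrow> real" where
  "adelta S (Dist t u) x e = min (tdelta S t x (e / 2)) (tdelta S u x (e / 2))"
| "adelta S (Rel R ts) x e =
     foldr min (map (\<lambda>i. tdelta S (ts ! i) x (rmod S R i e)) [0..<length ts]) e"

definition forcing_property ::
  "('f, 'r) csig \<Rightarrow> ('f, 'r) frm set \<Rightarrow> 'p set \<Rightarrow> ('p \<Rightarrow> 'p \<Rightarrow> bool)
     \<Rightarrow> ('p \<Rightarrow> ('f, 'r) atom \<Rightarrow> real) \<Rightarrow> bool" where
  "forcing_property S LA P le f \<longleftrightarrow>
     (\<forall>p\<in>P. le p p) \<and>
     (\<forall>p\<in>P. \<forall>q\<in>P. le p q \<and> le q p \<longrightarrow> p = q) \<and>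
     (\<forall>p\<in>P. \<forall>q\<in>P. \<forall>r\<in>P. le p q \<and> le q r \<longrightarrow> le p r) \<and>
     (\<forall>p\<in>P. \<forall>a\<in>LAC_atsent S LA. 0 \<le> f p a \<and> f p a \<le> 1) \<and>
     (\<forall>p\<in>P. \<forall>q\<in>P. le p q \<longrightarrow> (\<forall>a\<in>LAC_atsent S LA. f p a \<le> f q a)) \<and>
     (\<forall>p\<in>P. \<forall>e>0. \<forall>\<tau>\<in>closed_terms S. \<forall>\<sigma>\<in>closed_terms S. \<forall>a x.
        Atom a \<in> LAC S LA \<and> fva a \<subseteq> {x} \<longrightarrow>
        (\<exists>q\<in>P. \<exists>c. le q p \<and>
           f q (Dist \<tau> (Cst c)) < e \<and>
           f q (Dist \<tau> \<sigma>) < f p (Dist \<sigma> \<tau>) + e \<and>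
           (f p (Dist \<tau> \<sigma>) < adelta S a x e \<longrightarrow>
              f q (subst_atom (Var(x := \<sigma>)) a) < f p (subst_atom (Var(x := \<tau>)) a) + e)))"

text \<open>The forcing values F_p, defined with an assignment s of terms to the
  free variables (F_p(phi) is Fs with the identity assignment Var); the clause
  for inf_x realises F_p(inf_x phi) = inf_c F_p(phi(c)).\<close>
primrec Fs :: "'p set \<Rightarrow> ('p \<Rightarrow> 'p \<Rightarrow> bool) \<Rightarrow> ('p \<Rightarrow> ('f, 'r) atom \<Rightarrow> real)
     \<Rightarrow> ('f, 'r) frm \<Rightarrow> (nat \<Rightarrow> 'f trm) \<Rightarrow> 'p \<Rightarrow> real" where
  "Fs P le f (Atom a) s p = f p (subst_atom s a)"
| "Fs P le f (Neg \<phi>) s p = 1 - (INF q\<in>{q\<in>P. le q p}. Fs P le f \<phi> s q)"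
| "Fs P le f (Half \<phi>) s p = Fs P le f \<phi> s p / 2"
| "Fs P le f (Plus \<phi> \<psi>) s p = min (Fs P le f \<phi> s p + Fs P le f \<psi> s p) 1"
| "Fs P le f (Conj \<Phi>) s p = (INF n. Fs P le f (\<Phi> n) s p)"
| "Fs P le f (Inf x \<phi>) s p = (INF c. Fs P le f \<phi> (s(x := Cst c)) p)"

definition FF :: "'p set \<Rightarrow> ('p \<Rightarrow> 'p \<Rightarrow> bool) \<Rightarrow> ('p \<Rightarrow> ('f, 'r) atom \<Rightarrow> real)
     \<Rightarrow> 'p \<Rightarrow> ('f, 'r) frm \<Rightarrow> real" where
  "FF P le f p \<phi> = Fs P le f \<phi> Var p"

definition generic ::
  "('f, 'r) csig \<Rightarrow> ('f, 'r) frm set \<Rightarrow> 'p set \<Rightarrow> ('p \<Rightarrow> 'p \<Rightarrow> bool)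
     \<Rightarrow> ('p \<Rightarrow> ('f, 'r) atom \<Rightarrow> real) \<Rightarrow> 'p set \<Rightarrow> bool" where
  "generic S LA P le f G \<longleftrightarrow>
     G \<noteq> {} \<and> G \<subseteq> P \<and>
     (\<forall>p\<in>G. \<forall>q\<in>G. \<exists>r\<in>G. le r p \<and> le r q) \<and>
     (\<forall>p\<in>G. \<forall>q\<in>P. le p q \<longrightarrow> q \<in> G) \<and>
     (\<forall>\<phi>\<in>LAC_sent S LA. \<forall>r>1. \<exists>p\<in>G. FF P le f p \<phi> + FF P le f p (Neg \<phi>) < r)"

end

theory Submission
  imports Defs
begin

text \<open>A Rasiowa--Sikorski argument. For a sentence \<open>\<phi>\<close> and \<open>\<epsilon> > 0\<close> the conditions \<open>q\<close> with
  \<open>F_q(\<phi>) + F_q(\<not>\<phi>) < 1 + \<epsilon>\<close> are dense: since \<open>F_q(\<not>\<phi>) = 1 - inf {F_q'(\<phi>) | q' \<le> q}\<close>,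
  it suffices to pass from \<open>q\<close> to some \<open>q' \<le> q\<close> whose value \<open>F_q'(\<phi>)\<close> is \<open>\<epsilon>\<close>-close to the
  infimum over the conditions below \<open>q\<close>; this infimum exists because forcing values of
  sentences lie in \<open>[0,1]\<close>. There are only countably many such dense sets, as \<open>L_A(C)\<close> is
  contained in the \<open>\<omega>\<close>-fold closure of \<open>L_A\<close> under the fragment operations, which is a
  countable fragment. A descending sequence from \<open>p\<close> meeting all of them generates the
  generic set.\<close>

instance trm :: (countable) countable by countable_datatype
instance atom :: (countable, countable) countable by countable_datatype

lemma finite_fvt: "finite (fvt t)"
  by (induction t) auto

lemma finite_fva: "finite (fva a)"
  by (cases a) (auto simp: finite_fvt)

lemma fvt_subst_trm: "fvt (subst_trm s t) = (\<Union>v\<in>fvt t. fvt (s v))"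
  by (induction t) auto

lemma fva_subst_atom: "fva (subst_atom s a) = (\<Union>v\<in>fva a. fvt (s v))"
  by (cases a) (auto simp: fvt_subst_trm)

lemma subst_trm_cong: "(\<And>v. v \<in> fvt t \<Longrightarrow> s v = s' v) \<Longrightarrow> subst_trm s t = subst_trm s' t"
  by (induction t) auto

lemma subst_atom_cong: "(\<And>v. v \<in> fva a \<Longrightarrow> s v = s' v) \<Longrightarrow> subst_atom s a = subst_atom s' a"
  by (cases a) (auto intro: subst_trm_cong)

lemma subst_trm_Var: "subst_trm Var t = t"
  by (induction t) (auto intro: map_idI)

lemma subst_atom_Var: "subst_atom Var a = a"
  by (cases a) (auto intro: map_idI simp: subst_trm_Var)

lemma subst_trm_subst_trm: "subst_trm s (subst_trm s' t) = subst_trm (\<lambda>v. subst_trm s (s' v)) t"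
  by (induction t) auto

lemma subst_atom_subst_atom:
  "subst_atom s (subst_atom s' a) = subst_atom (\<lambda>v. subst_trm s (s' v)) a"
  by (cases a) (auto simp: subst_trm_subst_trm)

lemma fv_substf: "fv (substf s \<phi>) \<subseteq> (\<Union>v\<in>fv \<phi>. fvt (s v))"
proof (induction \<phi> arbitrary: s)
  case (Atom a)
  then show ?case by (simp add: fva_subst_atom)
next
  case (Inf x \<phi>)
  have "fv (substf (s(x := Var x)) \<phi>) \<subseteq> (\<Union>v\<in>fv \<phi>. fvt ((s(x := Var x)) v))"
    by (rule Inf.IH)
  also have "\<dots> \<subseteq> insert x (\<Union>v\<in>fv \<phi> - {x}. fvt (s v))"
    by (auto split: if_splits)
  finally show ?case by auto
qed fastforce+

lemma wft_mono: "wft S False t \<Longrightarrow> wft S b t"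
  by (induction t) (auto simp: list_all_iff)

lemma wfa_mono: "wfa S False a \<Longrightarrow> wfa S b a"
  by (cases a) (auto simp: list_all_iff wft_mono)

lemma wff_mono: "wff S False \<phi> \<Longrightarrow> wff S b \<phi>"
  by (induction \<phi>) (auto simp: wfa_mono)

lemma wft_subst_trm: "wft S b t \<Longrightarrow> (\<And>v. wft S b (s v)) \<Longrightarrow> wft S b (subst_trm s t)"
  by (induction t) (auto simp: list_all_iff)

lemma wfa_subst_atom: "wfa S b a \<Longrightarrow> (\<And>v. wft S b (s v)) \<Longrightarrow> wfa S b (subst_atom s a)"
  by (cases a) (auto simp: list_all_iff wft_subst_trm)

lemma wff_substf: "wff S b \<phi> \<Longrightarrow> (\<And>v. wft S b (s v)) \<Longrightarrow> wff S b (substf s \<phi>)"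
proof (induction \<phi> arbitrary: s)
  case (Atom a)
  then show ?case by (simp add: wfa_subst_atom)
next
  case (Conj \<Phi>)
  have "(\<Union>n. fv (substf s (\<Phi> n))) \<subseteq> (\<Union>v\<in>(\<Union>n. fv (\<Phi> n)). fvt (s v))"
    using fv_substf[of s] by blast
  moreover have "finite (\<Union>v\<in>(\<Union>n. fv (\<Phi> n)). fvt (s v))"
    using Conj.prems(1) by (simp add: finite_UN_I finite_fvt del: UN_simps)
  ultimately show ?case
    using Conj by (auto intro: finite_subset)
qed auto

primrec immediate_subformulas :: "('f, 'r) frm \<Rightarrow> ('f, 'r) frm set" where
  "immediate_subformulas (Atom a) = {}"
| "immediate_subformulas (Neg \<phi>) = {\<phi>}"
| "immediate_subformulas (Half \<phi>) = {\<phi>}"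
| "immediate_subformulas (Plus \<phi> \<psi>) = {\<phi>, \<psi>}"
| "immediate_subformulas (Conj \<Phi>) = range \<Phi>"
| "immediate_subformulas (Inf x \<phi>) = {\<phi>}"

lemma countable_immediate_subformulas: "countable (immediate_subformulas \<phi>)"
  by (cases \<phi>) auto

lemma wff_immediate_subformula: "wff S b \<phi> \<Longrightarrow> \<psi> \<in> immediate_subformulas \<phi> \<Longrightarrow> wff S b \<psi>"
  by (cases \<phi>) auto

section \<open>Countability of L_A(C)\<close>

definition fragment_step :: "('f, 'r) csig \<Rightarrow> ('f, 'r) frm set \<Rightarrow> ('f, 'r) frm set" where
  "fragment_step S X = X \<union> Atom ` {a. wfa S True a} \<union> Neg ` X \<union> Half ` X
     \<union> (\<Union>x. Inf x ` X) \<union> (\<Union>\<phi>\<in>X. Plus \<phi> ` X) \<union> (\<Union>\<phi>\<in>X. immediate_subformulas \<phi>)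
     \<union> {substf (Var(x := t)) \<phi> | \<phi> x t. \<phi> \<in> X \<and> wft S True t \<and> freefor t x \<phi>}"

primrec fragment_stage :: "('f, 'r) csig \<Rightarrow> ('f, 'r) frm set \<Rightarrow> nat \<Rightarrow> ('f, 'r) frm set" where
  "fragment_stage S LA 0 = LA"
| "fragment_stage S LA (Suc n) = fragment_step S (fragment_stage S LA n)"

definition fragment_closure :: "('f, 'r) csig \<Rightarrow> ('f, 'r) frm set \<Rightarrow> ('f, 'r) frm set" where
  "fragment_closure S LA = (\<Union>n. fragment_stage S LA n)"

lemma countable_fragment_step:
  fixes X :: "('f::countable, 'r::countable) frm set"
  assumes "countable X"
  shows "countable (fragment_step S X)"
proof -
  have "{substf (Var(x := t)) \<phi> | \<phi> x t. \<phi> \<in> X \<and> wft S True t \<and> freefor t x \<phi>}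
      \<subseteq> (\<lambda>(\<phi>, x, t). substf (Var(x := t)) \<phi>) ` (X \<times> (UNIV :: nat set) \<times> (UNIV :: 'f trm set))"
    by (force intro: image_eqI[where x = "(\<phi>, x, t)" for \<phi> x t])
  then have "countable {substf (Var(x := t)) \<phi> | \<phi> x t. \<phi> \<in> X \<and> wft S True t \<and> freefor t x \<phi>}"
    by (rule countable_subset) (simp add: assms)
  then show ?thesis
    unfolding fragment_step_def
    by (intro countable_Un countable_UN countable_image countableI_type assms
        countable_immediate_subformulas)
qed

lemma countable_fragment_closure:
  fixes LA :: "('f::countable, 'r::countable) frm set"
  assumes "countable LA"
  shows "countable (fragment_closure S LA)"
proof -
  have "countable (fragment_stage S LA n)" for n
    by (induction n) (simp_all add: assms countable_fragment_step)
  then show ?thesis by (simp add: fragment_closure_def)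
qed

lemma fragment_step_intros:
  "\<phi> \<in> X \<Longrightarrow> \<phi> \<in> fragment_step S X"
  "wfa S True a \<Longrightarrow> Atom a \<in> fragment_step S X"
  "\<phi> \<in> X \<Longrightarrow> Neg \<phi> \<in> fragment_step S X"
  "\<phi> \<in> X \<Longrightarrow> Half \<phi> \<in> fragment_step S X"
  "\<phi> \<in> X \<Longrightarrow> Inf x \<phi> \<in> fragment_step S X"
  "\<phi> \<in> X \<Longrightarrow> \<psi> \<in> X \<Longrightarrow> Plus \<phi> \<psi> \<in> fragment_step S X"
  "\<phi> \<in> X \<Longrightarrow> \<psi> \<in> immediate_subformulas \<phi> \<Longrightarrow> \<psi> \<in> fragment_step S X"
  "\<phi> \<in> X \<Longrightarrow> wft S True t \<Longrightarrow> freefor t x \<phi> \<Longrightarrow> substf (Var(x := t)) \<phi> \<in> fragment_step S X"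
  unfolding fragment_step_def by fast+

lemma fragment_stage_mono: "m \<le> n \<Longrightarrow> fragment_stage S LA m \<subseteq> fragment_stage S LA n"
  by (induction n rule: dec_induct) (auto intro: fragment_step_intros(1))

lemma fragment_step_closure_subset:
  "fragment_step S (fragment_closure S LA) \<subseteq> fragment_closure S LA"
proof -
  have Plus_in_step: "Plus \<phi> \<psi> \<in> fragment_step S (fragment_stage S LA (max n m))"
    if "\<phi> \<in> fragment_stage S LA n" "\<psi> \<in> fragment_stage S LA m" for \<phi> \<psi> n m
    using that fragment_stage_mono[of n "max n m" S LA] fragment_stage_mono[of m "max n m" S LA]
    by (intro fragment_step_intros) auto
  have "fragment_step S (fragment_closure S LA) \<subseteq> (\<Union>n. fragment_step S (fragment_stage S LA n))"
  proof
    fix \<chi> assume "\<chi> \<in> fragment_step S (fragment_closure S LA)"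
    then show "\<chi> \<in> (\<Union>n. fragment_step S (fragment_stage S LA n))"
      unfolding fragment_closure_def fragment_step_def[of S "\<Union>n. fragment_stage S LA n"]
      by (elim UnE) (blast intro: Plus_in_step fragment_step_intros)+
  qed
  also have "\<dots> = (\<Union>n. fragment_stage S LA (Suc n))"
    by simp
  also have "\<dots> \<subseteq> fragment_closure S LA"
    unfolding fragment_closure_def by blast
  finally show ?thesis .
qed

lemma wff_fragment_step:
  assumes "X \<subseteq> {\<phi>. wff S True \<phi>}"
  shows "fragment_step S X \<subseteq> {\<phi>. wff S True \<phi>}"
  using assms unfolding fragment_step_def
  by (auto intro: wff_immediate_subformula wff_substf)

lemma wff_fragment_closure:
  assumes "LA \<subseteq> {\<phi>. wff S False \<phi>}"
  shows "fragment_closure S LA \<subseteq> {\<phi>. wff S True \<phi>}"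
proof -
  have "fragment_stage S LA n \<subseteq> {\<phi>. wff S True \<phi>}" for n
    by (induction n) (use assms wff_mono in \<open>auto dest!: wff_fragment_step\<close>)
  then show ?thesis by (auto simp: fragment_closure_def)
qed

lemma is_fragment_if_fragment_step_closed:
  assumes "F \<subseteq> {\<phi>. wff S True \<phi>}" and "fragment_step S F \<subseteq> F"
  shows "is_fragment S True F"
  unfolding is_fragment_def
  using assms(1) fragment_step_intros[THEN subsetD[OF assms(2)]]
  by (intro conjI) fastforce+

lemma countable_LAC:
  fixes S :: "('f::countable, 'r::countable) csig"
  assumes "countable_fragment S LA"
  shows "countable (LAC S LA)"
proof -
  have LA: "LA \<subseteq> {\<phi>. wff S False \<phi>}" "countable LA"
    using assms by (auto simp: countable_fragment_def is_fragment_def)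
  have "is_fragment S True (fragment_closure S LA)"
    by (intro is_fragment_if_fragment_step_closed wff_fragment_closure LA(1)
        fragment_step_closure_subset)
  moreover have "LA \<subseteq> fragment_closure S LA"
    unfolding fragment_closure_def using UN_upper[of 0 UNIV "fragment_stage S LA"] by simp
  ultimately have "LAC S LA \<subseteq> fragment_closure S LA"
    unfolding LAC_def using countable_fragment_closure[OF LA(2)] by blast
  then show ?thesis
    using countable_fragment_closure[OF LA(2)] by (rule countable_subset)
qed

section \<open>Forcing values of sentences\<close>

lemma is_fragment_immediate_subformula:
  assumes "is_fragment S b F" "\<phi> \<in> F" "\<psi> \<in> immediate_subformulas \<phi>"
  shows "\<psi> \<in> F"
proof -
  have closed: "\<forall>\<phi>. Neg \<phi> \<in> F \<longrightarrow> \<phi> \<in> F" "\<forall>\<phi>. Half \<phi> \<in> F \<longrightarrow> \<phi> \<in> F"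
    "\<forall>\<phi> \<psi>. Plus \<phi> \<psi> \<in> F \<longrightarrow> \<phi> \<in> F \<and> \<psi> \<in> F"
    "\<forall>\<Phi>. Conj \<Phi> \<in> F \<longrightarrow> (\<forall>n. \<Phi> n \<in> F)" "\<forall>x \<phi>. Inf x \<phi> \<in> F \<longrightarrow> \<phi> \<in> F"
    using assms(1) unfolding is_fragment_def by blast+
  \<comment> \<open>not given to \<open>simp\<close>: the \<open>Conj\<close> clause would rewrite every membership goal\<close>
  show ?thesis
    using assms(2,3) by (cases \<phi>) (simp_all, (use closed in blast)+)
qed

lemma LAC_immediate_subformula:
  "\<phi> \<in> LAC S LA \<Longrightarrow> \<psi> \<in> immediate_subformulas \<phi> \<Longrightarrow> \<psi> \<in> LAC S LA"
  unfolding LAC_def by (blast intro: is_fragment_immediate_subformula)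

lemma LAC_Atom_subst_Cst:
  assumes "Atom a \<in> LAC S LA"
  shows "Atom (subst_atom (Var(x := Cst c)) a) \<in> LAC S LA"
  unfolding LAC_def
proof
  fix F assume F: "F \<in> {F. is_fragment S True F \<and> countable F \<and> LA \<subseteq> F}"
  then have "Atom a \<in> F" using assms unfolding LAC_def by blast
  moreover have "\<forall>\<phi>\<in>F. \<forall>x t. wft S True t \<and> freefor t x \<phi> \<longrightarrow> substf (Var(x := t)) \<phi> \<in> F"
    using F unfolding is_fragment_def by blast
  ultimately have "substf (Var(x := Cst c)) (Atom a) \<in> F"
    by (metis freefor.simps(1) wft.simps(2))
  then show "Atom (subst_atom (Var(x := Cst c)) a) \<in> F" by simp
qed

lemma LAC_Atom_subst_consts:
  assumes a: "Atom a \<in> LAC S LA" and constant_on_fva: "\<forall>v\<in>fva a. \<exists>c. s v = Cst c"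
  shows "Atom (subst_atom s a) \<in> LAC S LA"
proof -
  have "Atom (subst_atom (\<lambda>v. if v \<in> D then s v else Var v) a) \<in> LAC S LA"
    if "finite D" "D \<subseteq> fva a" for D
    using that
  proof (induction D rule: finite_induct)
    case empty
    then show ?case using a by (simp add: subst_atom_Var)
  next
    case (insert x D)
    obtain c where c: "s x = Cst c" using constant_on_fva insert.prems by blast
    let ?s = "\<lambda>v. if v \<in> D then s v else Var v"
    have "Atom (subst_atom (Var(x := Cst c)) (subst_atom ?s a)) \<in> LAC S LA"
      using insert by (intro LAC_Atom_subst_Cst) simp
    moreover have "(\<lambda>v. subst_trm (Var(x := Cst c)) (?s v)) = (\<lambda>v. if v \<in> insert x D then s v else Var v)"
      using insert constant_on_fva c by (force simp: fun_eq_iff)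
    ultimately show ?case by (simp add: subst_atom_subst_atom)
  qed
  moreover have "subst_atom s a = subst_atom (\<lambda>v. if v \<in> fva a then s v else Var v) a"
    by (rule subst_atom_cong) simp
  ultimately show ?thesis using finite_fva by auto
qed

lemma INF_in_unit_interval:
  fixes g :: "'a \<Rightarrow> real"
  assumes "A \<noteq> {}" and "\<And>x. x \<in> A \<Longrightarrow> 0 \<le> g x \<and> g x \<le> 1"
  shows "0 \<le> (INF x\<in>A. g x) \<and> (INF x\<in>A. g x) \<le> 1"
proof -
  obtain x where "x \<in> A" using assms(1) by blast
  moreover have "bdd_below (g ` A)" using assms(2) by (intro bdd_belowI2[of _ 0]) auto
  ultimately show ?thesis
    using assms by (auto intro: cINF_greatest cINF_lower2)
qed

text \<open>The bounds matter: \<open>INF\<close> on \<open>real\<close> is only meaningful for sets bounded below.\<close>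

lemma Fs_in_unit_interval:
  assumes atoms: "\<And>p a. p \<in> P \<Longrightarrow> a \<in> LAC_atsent S LA \<Longrightarrow> 0 \<le> f p a \<and> f p a \<le> 1"
    and refl: "\<And>p. p \<in> P \<Longrightarrow> le p p"
  shows "\<phi> \<in> LAC S LA \<Longrightarrow> \<forall>v\<in>fv \<phi>. \<exists>c. s v = Cst c \<Longrightarrow> p \<in> P
    \<Longrightarrow> 0 \<le> Fs P le f \<phi> s p \<and> Fs P le f \<phi> s p \<le> 1"
proof (induction \<phi> arbitrary: s p)
  case (Atom a)
  have "Atom (subst_atom s a) \<in> LAC S LA"
    using Atom.prems(1,2) by (intro LAC_Atom_subst_consts) auto
  moreover have "fva (subst_atom s a) = {}"
    using Atom.prems(2) by (auto simp: fva_subst_atom)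
  ultimately show ?case
    using atoms Atom.prems(3) by (simp add: LAC_atsent_def)
next
  case (Neg \<phi>)
  have "\<phi> \<in> LAC S LA" using Neg.prems(1) by (rule LAC_immediate_subformula) simp
  then have "0 \<le> (INF q\<in>{q \<in> P. le q p}. Fs P le f \<phi> s q) \<and> (INF q\<in>{q \<in> P. le q p}. Fs P le f \<phi> s q) \<le> 1"
    using Neg refl by (intro INF_in_unit_interval) auto
  then show ?case
    by simp
next
  case (Half \<phi>)
  have "\<phi> \<in> LAC S LA" using Half.prems(1) by (rule LAC_immediate_subformula) simp
  then show ?case
    using Half by fastforce
next
  case (Plus \<phi> \<psi>)
  have "\<phi> \<in> LAC S LA" "\<psi> \<in> LAC S LA"
    using Plus.prems(1) by (auto intro: LAC_immediate_subformula)
  then show ?case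
    using Plus by fastforce
next
  case (Conj \<Phi>)
  have "\<Phi> n \<in> LAC S LA" for n using Conj.prems(1) by (rule LAC_immediate_subformula) simp
  then show ?case
    using Conj by (simp add: INF_in_unit_interval)
next
  case (Inf x \<phi>)
  have "\<phi> \<in> LAC S LA" using Inf.prems(1) by (rule LAC_immediate_subformula) simp
  then show ?case
    using Inf by (simp add: INF_in_unit_interval)
qed

lemma
  assumes "forcing_property S LA P le f"
  shows forcing_property_refl: "p \<in> P \<Longrightarrow> le p p"
    and forcing_property_trans: "p \<in> P \<Longrightarrow> q \<in> P \<Longrightarrow> r \<in> P \<Longrightarrow> le p q \<Longrightarrow> le q r \<Longrightarrow> le p r"
    and forcing_property_atom_bounds:
      "p \<in> P \<Longrightarrow> a \<in> LAC_atsent S LA \<Longrightarrow> 0 \<le> f p a \<and> f p a \<le> 1"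
proof -
  note fp = assms[unfolded forcing_property_def]
  show "p \<in> P \<Longrightarrow> le p p" using conjunct1[OF fp] by blast
  show "p \<in> P \<Longrightarrow> q \<in> P \<Longrightarrow> r \<in> P \<Longrightarrow> le p q \<Longrightarrow> le q r \<Longrightarrow> le p r"
    using conjunct1[OF conjunct2[OF conjunct2[OF fp]]] by blast
  show "p \<in> P \<Longrightarrow> a \<in> LAC_atsent S LA \<Longrightarrow> 0 \<le> f p a \<and> f p a \<le> 1"
    using conjunct1[OF conjunct2[OF conjunct2[OF conjunct2[OF fp]]]] by blast
qed

lemma FF_sentence_in_unit_interval:
  assumes "forcing_property S LA P le f" "\<phi> \<in> LAC_sent S LA" "p \<in> P"
  shows "0 \<le> FF P le f p \<phi> \<and> FF P le f p \<phi> \<le> 1"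
  using assms(2,3) unfolding LAC_sent_def FF_def
  by (intro Fs_in_unit_interval forcing_property_atom_bounds[OF assms(1)]
      forcing_property_refl[OF assms(1)]) auto

lemma ex_le_near_INF_below:
  fixes g :: "'p \<Rightarrow> real"
  assumes refl: "\<And>p. p \<in> P \<Longrightarrow> le p p"
    and trans: "\<And>p q r. p \<in> P \<Longrightarrow> q \<in> P \<Longrightarrow> r \<in> P \<Longrightarrow> le p q \<Longrightarrow> le q r \<Longrightarrow> le p r"
    and bdd: "bdd_below (g ` P)" and "q \<in> P" and "0 < e"
  shows "\<exists>q'\<in>P. le q' q \<and> g q' < (INF q''\<in>{q''\<in>P. le q'' q'}. g q'') + e"
proof -
  let ?below = "\<lambda>q. {q'\<in>P. le q' q}"
  have "?below q \<noteq> {}" using \<open>q \<in> P\<close> refl by blast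
  moreover have bdd_below: "bdd_below (g ` ?below q')" for q'
    using bdd by (rule bdd_below_mono) auto
  moreover have "(INF q'\<in>?below q. g q') < (INF q'\<in>?below q. g q') + e"
    using \<open>0 < e\<close> by simp
  ultimately obtain q' where q': "q' \<in> ?below q" "g q' < (INF q'\<in>?below q. g q') + e"
    by (subst (asm) cINF_less_iff) auto
  have "?below q' \<noteq> {}" using q'(1) refl by blast
  moreover have "?below q' \<subseteq> ?below q"
    using q'(1) \<open>q \<in> P\<close> by (blast intro: trans)
  ultimately have "(INF q'\<in>?below q. g q') \<le> (INF q''\<in>?below q'. g q'')"
    by (intro cINF_superset_mono bdd_below) auto
  then show ?thesis using q' by fastforce
qed

lemma FF_Neg_dense:
  assumes fp: "forcing_property S LA P le f" and "\<phi> \<in> LAC_sent S LA" "q \<in> P" "0 < e"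
  shows "\<exists>q'\<in>P. le q' q \<and> FF P le f q' \<phi> + FF P le f q' (Neg \<phi>) < 1 + e"
proof -
  have "bdd_below ((\<lambda>q. FF P le f q \<phi>) ` P)"
    using FF_sentence_in_unit_interval[OF fp \<open>\<phi> \<in> LAC_sent S LA\<close>]
    by (intro bdd_belowI2[of _ 0]) auto
  then have "\<exists>q'\<in>P. le q' q \<and> FF P le f q' \<phi> < (INF q''\<in>{q''\<in>P. le q'' q'}. FF P le f q'' \<phi>) + e"
    using \<open>q \<in> P\<close> \<open>0 < e\<close> forcing_property_refl[OF fp] forcing_property_trans[OF fp]
    by (rule ex_le_near_INF_below[rotated 2])
  then show ?thesis by (auto simp: FF_def)
qed

lemma rasiowa_sikorski:
  assumes refl: "\<And>p. p \<in> P \<Longrightarrow> le p p"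
    and trans: "\<And>p q r. p \<in> P \<Longrightarrow> q \<in> P \<Longrightarrow> r \<in> P \<Longrightarrow> le p q \<Longrightarrow> le q r \<Longrightarrow> le p r"
    and "countable I"
    and dense: "\<And>i q. i \<in> I \<Longrightarrow> q \<in> P \<Longrightarrow> \<exists>q'\<in>P. le q' q \<and> D i q'"
    and "p \<in> P"
  obtains G where "p \<in> G" "G \<subseteq> P" "\<forall>a\<in>G. \<forall>b\<in>G. \<exists>r\<in>G. le r a \<and> le r b"
    "\<forall>a\<in>G. \<forall>b\<in>P. le a b \<longrightarrow> b \<in> G" "\<forall>i\<in>I. \<exists>q\<in>G. D i q"
proof -
  let ?i = "from_nat_into I"
  \<comment> \<open>the guard \<open>?i n \<in> I\<close> covers \<open>I = {}\<close>, where \<open>from_nat_into\<close> is arbitrary\<close>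
  let ?next = "\<lambda>n q. SOME q'. q' \<in> P \<and> le q' q \<and> (?i n \<in> I \<longrightarrow> D (?i n) q')"
  define seq where "seq = rec_nat p ?next"
  have next_spec: "?next n q \<in> P \<and> le (?next n q) q \<and> (?i n \<in> I \<longrightarrow> D (?i n) (?next n q))"
    if "q \<in> P" for n q
    by (rule someI_ex) (use that refl dense in blast)
  have seq_P: "seq n \<in> P" for n
    by (induction n) (simp_all add: seq_def \<open>p \<in> P\<close> next_spec)
  have seq_Suc: "le (seq (Suc n)) (seq n)" and seq_D: "?i n \<in> I \<Longrightarrow> D (?i n) (seq (Suc n))" for n
    using next_spec[OF seq_P[of n]] by (simp_all add: seq_def)
  have seq_mono: "le (seq n) (seq m)" if "m \<le> n" for m n
    using that
  proof (induction n rule: dec_induct)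
    case base
    then show ?case using refl seq_P by blast
  next
    case (step n)
    then show ?case using trans seq_P seq_Suc by blast
  qed
  define G where "G = {q\<in>P. \<exists>n. le (seq n) q}"
  show thesis
  proof
    show "p \<in> G" using \<open>p \<in> P\<close> refl by (auto simp: G_def seq_def intro!: exI[of _ 0])
    show "G \<subseteq> P" by (auto simp: G_def)
    show "\<forall>a\<in>G. \<forall>b\<in>G. \<exists>r\<in>G. le r a \<and> le r b"
    proof (intro ballI)
      fix a b assume "a \<in> G" "b \<in> G"
      then obtain m n where a: "a \<in> P" "le (seq m) a" and b: "b \<in> P" "le (seq n) b"
        by (auto simp: G_def)
      have "le (seq (max m n)) (seq m)" "le (seq (max m n)) (seq n)"
        by (simp_all add: seq_mono)
      then have "le (seq (max m n)) a" "le (seq (max m n)) b"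
        using trans[OF seq_P seq_P a(1)] trans[OF seq_P seq_P b(1)] a(2) b(2) by blast+
      moreover have "seq (max m n) \<in> G" using seq_P refl by (auto simp: G_def)
      ultimately show "\<exists>r\<in>G. le r a \<and> le r b" by blast
    qed
    show "\<forall>a\<in>G. \<forall>b\<in>P. le a b \<longrightarrow> b \<in> G"
      unfolding G_def using trans[OF seq_P] by blast
    show "\<forall>i\<in>I. \<exists>q\<in>G. D i q"
    proof
      fix i assume "i \<in> I"
      then obtain n where "?i n = i" using from_nat_into_surj[OF \<open>countable I\<close>] by blast
      then show "\<exists>q\<in>G. D i q"
        using seq_D[of n] seq_P refl \<open>i \<in> I\<close> by (auto simp: G_def)
    qed
  qed
qed

theorem proposition2p12:
  fixes S :: "('f::countable, 'r::countable) csig"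
    and LA :: "('f, 'r) frm set"
    and P :: "'p set"
    and le :: "'p \<Rightarrow> 'p \<Rightarrow> bool"
    and f :: "'p \<Rightarrow> ('f, 'r) atom \<Rightarrow> real"
  assumes "valid_sig S"
    and "countable_fragment S LA"
    and "forcing_property S LA P le f"
    and "p \<in> P"
  shows "\<exists>G. generic S LA P le f G \<and> p \<in> G"
proof -
  let ?decided = "\<lambda>(\<phi>, k) q. FF P le f q \<phi> + FF P le f q (Neg \<phi>) < 1 + inverse (real (Suc k))"
  have countable: "countable (LAC_sent S LA \<times> (UNIV :: nat set))"
    using countable_LAC[OF assms(2)] by (auto simp: LAC_sent_def intro: countable_subset)
  have dense: "\<exists>q'\<in>P. le q' q \<and> ?decided i q'" if "i \<in> LAC_sent S LA \<times> UNIV" "q \<in> P" for i q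
    using that by (cases i) (auto intro!: FF_Neg_dense[OF assms(3)])
  obtain G where G: "p \<in> G" "G \<subseteq> P" "\<forall>a\<in>G. \<forall>b\<in>G. \<exists>r\<in>G. le r a \<and> le r b"
      "\<forall>a\<in>G. \<forall>b\<in>P. le a b \<longrightarrow> b \<in> G" "\<forall>i\<in>LAC_sent S LA \<times> UNIV. \<exists>q\<in>G. ?decided i q"
    using forcing_property_refl[OF assms(3)] forcing_property_trans[OF assms(3)] countable dense assms(4)
    by (rule rasiowa_sikorski)
  have "\<exists>q\<in>G. FF P le f q \<phi> + FF P le f q (Neg \<phi>) < r" if "\<phi> \<in> LAC_sent S LA" "1 < r" for \<phi> r
  proof -
    obtain k where "inverse (real (Suc k)) < r - 1"
      using reals_Archimedean[of "r - 1"] \<open>1 < r\<close> by auto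
    moreover obtain q where "q \<in> G" "?decided (\<phi>, k) q"
      using G(5) \<open>\<phi> \<in> LAC_sent S LA\<close> by blast
    ultimately show ?thesis by force
  qed
  then have "generic S LA P le f G"
    using G unfolding generic_def by blast
  then show ?thesis using G(1) by blast
qed

end
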